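(* For all integers $m,n\ge1$, every function $\Psi:\mathbb{Z}^n\to\mathbb{R}_{>0}$ and each $\circ\in\{\ ,\ ',\ ''\}$, the set $\mathcal{F}^\circ_{n,m}(\Psi)=\bigcup_{k=1}^\infty\mathcal{A}^\circ_{n,m}(k\Psi)$ has Lebesgue measure $0$ or $1$.
   Context: Let $m,n\ge1$ be integers. Points $\mathbf{X}\in[0,1]^{nm}$ are regarded as real $n\times m$ matrices, $\mathbf{q}\in\mathbb{Z}^n$ as a row vector, so $\mathbf{q}\mathbf{X}\in\mathbb{R}^m$; $|\cdot|$ denotes the supremum norm on $\mathbb{R}^m$. For $\Psi:\mathbb{Z}^n\to\mathbb{R}_{>0}$ consider the inequality ( * ) $|\mathbf{q}\mathbf{X}+\mathbf{p}|<\Psi(\mathbf{q})$, with $\mathbf{p}=(p_1,\dots,p_m)\in\mathbb{Z}^m$, $\mathbf{q}\in\mathbb{Z}^n\setminus\{\mathbf{0}\}$. $\mathcal{A}_{n,m}(\Psi)$ is the set of $\mathbf{X}\in[0,1]^{nm}$ for which ( * ) holds for infinitely many pairs $(\mathbf{p},\mathbf{q})$; $\mathcal{A}'_{n,m}(\Psi)$ is the set of $\mathbf{X}\in[0,1]^{nm}$ for which ( * ) holds for infinitely many $(\mathbf{p},\mathbf{q})$ with $\gcd(\mathbf{p},\mathbf{q})=1$ (the gcd of all components of $\mathbf{p}$ and $\mathbf{q}$); $\mathcal{A}''_{n,m}(\Psi)$ is the set of $\mathbf{X}\in[0,1]^{nm}$ for which ( * ) holds for infinitely many $(\mathbf{p},\mathbf{q})$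 with $\gcd(p_j,\mathbf{q})=1$ for every $j=1,\dots,m$. $\mathcal{A}^\circ_{n,m}$ denotes any one of $\mathcal{A}_{n,m},\mathcal{A}'_{n,m},\mathcal{A}''_{n,m}$, and $k\Psi$ is the function $\mathbf{q}\mapsto k\Psi(\mathbf{q})$. *)

theory Defs
  imports "HOL-Analysis.Analysis"
begin

text \<open>Matrices X in [0,1]^{nm} are elements of real^'m^'n (n rows indexed by 'n,
  m columns indexed by 'm); q in Z^n is int^'n, p in Z^m is int^'m.\<close>

definition row_times :: "int ^ 'n \<Rightarrow> real ^ 'm ^ 'n \<Rightarrow> real ^ 'm" where
  "row_times q X = (\<chi> j. \<Sum>i\<in>UNIV. real_of_int (q $ i) * X $ i $ j)"

definition sup_norm :: "real ^ 'm \<Rightarrow> real" where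
  "sup_norm v = Max (range (\<lambda>j. \<bar>v $ j\<bar>))"

definition unit_cube :: "(real ^ 'm ^ 'n) set" where
  "unit_cube = {X. \<forall>i j. 0 \<le> X $ i $ j \<and> X $ i $ j \<le> 1}"

datatype variant = Plain | Coprime | CoprimeEach

definition admissible :: "variant \<Rightarrow> int ^ 'm \<Rightarrow> int ^ 'n \<Rightarrow> bool" where
  "admissible v p q = (case v of
      Plain \<Rightarrow> True
    | Coprime \<Rightarrow> Gcd (range (\<lambda>j. p $ j) \<union> range (\<lambda>i. q $ i)) = 1
    | CoprimeEach \<Rightarrow> (\<forall>j. Gcd (insert (p $ j) (range (\<lambda>i. q $ i))) = 1))"

definition approx_set :: "variant \<Rightarrow> (int ^ 'n \<Rightarrow> real) \<Rightarrow> (real ^ 'm ^ 'n) set" where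
  "approx_set v \<Psi> = {X \<in> unit_cube.
     infinite {(p :: int ^ 'm, q :: int ^ 'n). q \<noteq> 0 \<and> admissible v p q \<and>
        sup_norm (row_times q X + (\<chi> j. real_of_int (p $ j))) < \<Psi> q}}"

definition F_set :: "variant \<Rightarrow> (int ^ 'n \<Rightarrow> real) \<Rightarrow> (real ^ 'm ^ 'n) set" where
  "F_set v \<Psi> = (\<Union>k\<in>{1::nat..}. approx_set v (\<lambda>q. real k * \<Psi> q))"

end

theory Submission
  imports Defs
begin

text \<open>
  The solutions are split by the 2-adic valuation of \<open>gcd(q)\<close>.  For each level \<open>t\<close> and
  coordinate \<open>i\<close> witnessing it, the set of \<open>X\<close> with infinitely many solutions of this type
  is invariant under the doubling map \<open>X \<mapsto> frac (2X + c)\<close> for a suitable shift \<open>c\<close>; the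
  set of \<open>X\<close> with infinitely many solutions of every level is invariant under all dyadic
  translations modulo 1.  In both cases the factor \<open>k\<close> absorbs the change of constant, and
  coprimality of \<open>(p, q)\<close> is preserved.  Invariant sets of either kind have measure 0 or 1:
  via a weak Lebesgue density lemma on dyadic cells, an invariant set of intermediate measure
  would have the same density in every dyadic cell (translations), or would contain a blown-up
  copy of a cell in which it is denser than average (doubling).  Since \<open>F_set\<close> is covered by
  the unbounded-valuation set and the countably many level sets, all of which it contains,
  it has measure 0 or 1 as well.
\<close>

text \<open>Reduction modulo 1 is done
  entrywise; the half-open cube \<open>[0,1)^{nm}\<close> is its range and differs from the closed cube
  only by a null set.\<close>

definition int_mat :: "int^'m^'n \<Rightarrow> real^'m^'n" where
  "int_mat w = (\<chi> i j. real_of_int (w$i$j))"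

definition floor_mat :: "real^'m^'n \<Rightarrow> int^'m^'n" where
  "floor_mat X = (\<chi> i j. \<lfloor>X$i$j\<rfloor>)"

definition frac_mat :: "real^'m^'n \<Rightarrow> real^'m^'n" where
  "frac_mat X = (\<chi> i j. frac (X$i$j))"

definition half_open_cube :: "(real^'m^'n) set" where
  "half_open_cube = {X. \<forall>i j. 0 \<le> X$i$j \<and> X$i$j < 1}"

lemma int_mat_nth [simp]: "int_mat w $ i $ j = real_of_int (w$i$j)"
  by (simp add: int_mat_def)

lemma frac_mat_eq: "frac_mat X = X - int_mat (floor_mat X)"
  by (simp add: frac_mat_def floor_mat_def vec_eq_iff frac_def)

lemma frac_mat_in_half_open_cube: "frac_mat X \<in> half_open_cube"
  by (simp add: half_open_cube_def frac_mat_def frac_lt_1)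

lemma frac_mat_id: "X \<in> half_open_cube \<Longrightarrow> frac_mat X = X"
  by (simp add: half_open_cube_def frac_mat_def vec_eq_iff frac_eq)

lemma matrix_entry_measurable [measurable]: "(\<lambda>X :: real^'m^'n. X$i$j) \<in> borel_measurable borel"
  by (intro borel_measurable_continuous_onI continuous_intros)

lemma mem_cbox_matrix: "(X :: real^'m^'n) \<in> cbox a b \<longleftrightarrow> (\<forall>i j. a$i$j \<le> X$i$j \<and> X$i$j \<le> b$i$j)"
  by (auto simp: mem_box Basis_vec_def inner_axis)

lemma One_matrix_nth [simp]: "(\<Sum>x\<in>(Basis :: (real^'m^'n) set). x$i$j) = 1"
proof -
  have "axis i (axis j 1) \<in> (Basis :: (real^'m^'n) set)" by (auto simp: Basis_vec_def)
  from inner_sum_Basis[OF this] show ?thesis by (simp add: inner_axis)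
qed

lemma borel_imp_lebesgue: "A \<in> sets borel \<Longrightarrow> A \<in> sets (lebesgue :: 'a::euclidean_space measure)"
  by (simp add: sets_completionI_sets)

lemma unit_cube_cbox: "(unit_cube :: (real^'m^'n) set) = cbox 0 One"
  by (auto simp: unit_cube_def mem_cbox_matrix)

lemma frac_mat_in_unit_cube: "frac_mat X \<in> unit_cube"
  using frac_mat_in_half_open_cube[of X] by (auto simp: unit_cube_def half_open_cube_def less_imp_le)

lemma half_open_cube_borel: "(half_open_cube :: (real^'m^'n) set) \<in> sets borel"
  unfolding half_open_cube_def by measurable

lemma unit_cube_borel: "(unit_cube :: (real^'m^'n) set) \<in> sets borel"
  by (simp add: unit_cube_cbox)

text \<open>The cube and the half-open cube differ by finitely many pieces of hyperplanes.\<close>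

lemma unit_cube_minus_half_open_null:
  "(unit_cube - half_open_cube :: (real^'m^'n) set) \<in> null_sets lebesgue"
proof -
  let ?H = "\<lambda>i j. {X :: real^'m^'n. X \<bullet> axis i (axis j 1) = 1}"
  have sub: "(unit_cube - half_open_cube :: (real^'m^'n) set) \<subseteq> (\<Union>i. \<Union>j. ?H i j)"
    by (force simp: unit_cube_def half_open_cube_def inner_axis less_le)
  have "?H i j \<in> null_sets lebesgue" for i j
  proof -
    have "axis i (axis j 1) \<in> (Basis :: (real^'m^'n) set)" by (auto simp: Basis_vec_def)
    then show ?thesis using negligible_standard_hyperplane negligible_iff_null_sets by blast
  qed
  then have "(\<Union>i. \<Union>j. ?H i j) \<in> null_sets lebesgue"
    by (intro null_sets.finite_UN) simp_all
  moreover have "(unit_cube - half_open_cube :: (real^'m^'n) set) \<in> sets lebesgue"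
    using unit_cube_borel half_open_cube_borel by (intro sets.Diff borel_imp_lebesgue)
  ultimately show ?thesis using sub null_sets_subset by blast
qed

lemma half_open_cube_lmeasurable: "(half_open_cube :: (real^'m^'n) set) \<in> lmeasurable"
  by (rule fmeasurableI2[OF lmeasurable_cbox, of _ 0 One])
     (auto simp: half_open_cube_def mem_cbox_matrix less_imp_le half_open_cube_borel
           intro: borel_imp_lebesgue)

lemma inter_half_open_cube_lebesgue:
  "A \<in> sets borel \<Longrightarrow> A \<inter> half_open_cube \<in> sets lebesgue"
  using half_open_cube_borel by (intro borel_imp_lebesgue sets.Int)

lemma measure_inter_half_open_cube:
  assumes "A \<in> sets lebesgue" "A \<subseteq> unit_cube"
  shows "measure lebesgue (A \<inter> half_open_cube) = measure lebesgue A"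
proof -
  have "A \<inter> half_open_cube = A - (unit_cube - half_open_cube)" using assms(2) by blast
  then show ?thesis using measure_Diff_null_set[OF assms(1) unit_cube_minus_half_open_null] by simp
qed

lemma measure_half_open_cube: "measure lebesgue (half_open_cube :: (real^'m^'n) set) = 1"
proof -
  have "unit_cube \<inter> half_open_cube = (half_open_cube :: (real^'m^'n) set)"
    by (auto simp: unit_cube_def half_open_cube_def less_imp_le)
  moreover have "measure lebesgue (unit_cube \<inter> half_open_cube :: (real^'m^'n) set)
      = measure lebesgue (unit_cube :: (real^'m^'n) set)"
    by (rule measure_inter_half_open_cube[OF borel_imp_lebesgue[OF unit_cube_borel] order_refl])
  ultimately show ?thesis by (simp add: unit_cube_cbox)
qed

section \<open>Dyadic cells\<close>

definition dyadic_cell :: "nat \<Rightarrow> int^'m^'n \<Rightarrow> (real^'m^'n) set" where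
  "dyadic_cell s w = {X. \<forall>i j. \<lfloor>2^s * X$i$j\<rfloor> = w$i$j}"

definition dyadic_labels :: "nat \<Rightarrow> (int^'m^'n) set" where
  "dyadic_labels s = {w. \<forall>i j. 0 \<le> w$i$j \<and> w$i$j < 2^s}"

lemma finite_vec_entries: "finite S \<Longrightarrow> finite {v :: 'a^'k. \<forall>i. v$i \<in> S}"
proof -
  assume S: "finite S"
  have "{v :: 'a^'k. \<forall>i. v$i \<in> S} \<subseteq> vec_lambda ` (PiE UNIV (\<lambda>_. S))"
  proof
    fix v :: "'a^'k" assume "v \<in> {v. \<forall>i. v$i \<in> S}"
    then have "(\<lambda>i. v$i) \<in> PiE UNIV (\<lambda>_. S)" by auto
    then show "v \<in> vec_lambda ` PiE UNIV (\<lambda>_. S)" by (metis image_eqI vec_lambda_eta)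
  qed
  then show ?thesis by (rule finite_subset) (simp add: finite_PiE S)
qed

lemma finite_matrix_entries: "finite S \<Longrightarrow> finite {v :: 'a^'m^'n. \<forall>i j. v$i$j \<in> S}"
proof -
  assume S: "finite S"
  have "{v :: 'a^'m^'n. \<forall>i j. v$i$j \<in> S} = {v. \<forall>i. v$i \<in> {u. \<forall>j. u$j \<in> S}}" by auto
  then show ?thesis using finite_vec_entries[OF finite_vec_entries[OF S]] by simp
qed

lemma finite_dyadic_labels: "finite (dyadic_labels s)"
proof -
  have "dyadic_labels s \<subseteq> {v. \<forall>i j. v$i$j \<in> {0..<2^s}}" by (auto simp: dyadic_labels_def)
  then show ?thesis by (rule finite_subset) (intro finite_matrix_entries, simp)
qed

lemma dyadic_cell_image:
  "dyadic_cell s w = (\<lambda>Y. (1/2^s) *\<^sub>R Y + (1/2^s) *\<^sub>R int_mat w) ` half_open_cube"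
proof (intro equalityI subsetI)
  fix X assume X: "X \<in> dyadic_cell s w"
  let ?Y = "(2^s) *\<^sub>R X - int_mat w"
  have "of_int (w$i$j) \<le> 2^s * X$i$j \<and> 2^s * X$i$j < of_int (w$i$j) + 1" for i j
    using X by (simp add: dyadic_cell_def floor_eq_iff)
  then have "0 \<le> ?Y$i$j \<and> ?Y$i$j < 1" for i j
    by (simp add: diff_less_eq add.commute)
  then have "?Y \<in> half_open_cube" by (simp add: half_open_cube_def)
  moreover have "X = (1/2^s) *\<^sub>R ?Y + (1/2^s) *\<^sub>R int_mat w"
    by (simp add: algebra_simps)
  ultimately show "X \<in> (\<lambda>Y. (1/2^s) *\<^sub>R Y + (1/2^s) *\<^sub>R int_mat w) ` half_open_cube" by blast
next
  fix X assume "X \<in> (\<lambda>Y. (1/2^s) *\<^sub>R Y + (1/2^s) *\<^sub>R int_mat w) ` half_open_cube"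
  then obtain Y where Y: "Y \<in> half_open_cube" and X: "X = (1/2^s) *\<^sub>R Y + (1/2^s) *\<^sub>R int_mat w"
    by blast
  have "2^s * X$i$j = Y$i$j + of_int (w$i$j)" for i j
    using X by (simp add: field_simps)
  then show "X \<in> dyadic_cell s w"
    using Y by (simp add: dyadic_cell_def half_open_cube_def floor_eq_iff)
qed

lemma dyadic_cell_borel: "dyadic_cell s w \<in> sets borel"
  unfolding dyadic_cell_def by measurable

lemma emeasure_dyadic_cell:
  "emeasure lebesgue (dyadic_cell s w :: (real^'m^'n) set) = ennreal ((1/2^s)^DIM(real^'m^'n))"
proof -
  have "emeasure lebesgue (dyadic_cell s w :: (real^'m^'n) set)
      = ennreal (\<bar>1/2^s\<bar>^DIM(real^'m^'n)) * emeasure lebesgue (half_open_cube :: (real^'m^'n) set)"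
    unfolding dyadic_cell_image
    using emeasure_lebesgue_affine[of "1/2^s" "(1/2^s) *\<^sub>R int_mat w" half_open_cube] by simp
  also have "emeasure lebesgue (half_open_cube :: (real^'m^'n) set) = 1"
    using measure_half_open_cube half_open_cube_lmeasurable by (metis emeasure_eq_measure2 ennreal_1)
  finally show ?thesis by simp
qed

lemma dyadic_cell_lmeasurable: "dyadic_cell s w \<in> lmeasurable"
  using emeasure_dyadic_cell[of s w] dyadic_cell_borel[of s w]
  by (intro fmeasurableI) auto

lemma measure_dyadic_cell:
  "measure lebesgue (dyadic_cell s w :: (real^'m^'n) set) = (1/2^s)^DIM(real^'m^'n)"
  using emeasure_dyadic_cell[of s w] dyadic_cell_lmeasurable[of s w]
  by (simp add: emeasure_eq_measure2)

lemma in_dyadic_cell: "(X :: real^'m^'n) \<in> dyadic_cell s (\<chi> i j. \<lfloor>2^s * X$i$j\<rfloor>)"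
  by (simp add: dyadic_cell_def)

lemma dyadic_cells_disjoint: "w \<noteq> w' \<Longrightarrow> dyadic_cell s w \<inter> dyadic_cell s w' = {}"
  by (auto simp: dyadic_cell_def vec_eq_iff)

lemma half_open_cube_Union_cells:
  "(half_open_cube :: (real^'m^'n) set) = (\<Union>w\<in>dyadic_labels s. dyadic_cell s w)"
proof (intro equalityI subsetI)
  fix X :: "real^'m^'n" assume X: "X \<in> half_open_cube"
  let ?w = "(\<chi> i j. \<lfloor>2^s * X$i$j\<rfloor>) :: int^'m^'n"
  have "0 \<le> \<lfloor>2^s * X$i$j\<rfloor> \<and> \<lfloor>2^s * X$i$j\<rfloor> < 2^s" for i j
  proof -
    have "0 \<le> 2^s * X$i$j" "2^s * X$i$j < 2^s" using X by (auto simp: half_open_cube_def)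
    then show ?thesis by (simp add: floor_less_iff)
  qed
  then have "?w \<in> dyadic_labels s" by (simp add: dyadic_labels_def)
  then show "X \<in> (\<Union>w\<in>dyadic_labels s. dyadic_cell s w)" using in_dyadic_cell by blast
next
  fix X :: "real^'m^'n" assume "X \<in> (\<Union>w\<in>dyadic_labels s. dyadic_cell s w)"
  then obtain w where w: "w \<in> dyadic_labels s" and X: "X \<in> dyadic_cell s w" by blast
  have "0 \<le> X$i$j \<and> X$i$j < 1" for i j
  proof -
    have fl: "\<lfloor>2^s * X$i$j\<rfloor> = w$i$j" using X by (simp add: dyadic_cell_def)
    have "0 \<le> w$i$j" "w$i$j < 2^s" using w by (auto simp: dyadic_labels_def)
    then have "w$i$j + 1 \<le> 2^s" by simp
    then have "real_of_int (w$i$j + 1) \<le> of_int (2^s)" by (simp only: of_int_le_iff)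
    then have "real_of_int (w$i$j) + 1 \<le> 2^s" by simp
    then have "0 \<le> 2^s * X$i$j" "2^s * X$i$j < 2^s"
      using fl \<open>0 \<le> w$i$j\<close> by linarith+
    moreover have "(0::real) < 2^s" by simp
    ultimately show ?thesis
      using mult_le_cancel_left_pos[of "2^s" 0 "X$i$j"] mult_less_cancel_left_pos[of "2^s" "X$i$j" 1]
      by simp
  qed
  then show "X \<in> half_open_cube" by (simp add: half_open_cube_def)
qed

lemma dyadic_cell_subset: "w \<in> dyadic_labels s \<Longrightarrow> dyadic_cell s w \<subseteq> half_open_cube"
  using half_open_cube_Union_cells[of s] by blast

lemma dyadic_labels_of_cell:
  "X \<in> half_open_cube \<Longrightarrow> X \<in> dyadic_cell s w \<Longrightarrow> w \<in> dyadic_labels s"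
proof -
  assume "X \<in> half_open_cube" "X \<in> dyadic_cell s w"
  then obtain w' where "w' \<in> dyadic_labels s" "X \<in> dyadic_cell s w'"
    using half_open_cube_Union_cells[of s] by blast
  then show "w \<in> dyadic_labels s"
    using dyadic_cells_disjoint[of w w' s] \<open>X \<in> dyadic_cell s w\<close> by blast
qed

lemma inter_dyadic_cell_lmeasurable: "G \<in> sets lebesgue \<Longrightarrow> G \<inter> dyadic_cell s w \<in> lmeasurable"
  using dyadic_cell_lmeasurable[of s w]
  by (intro fmeasurableI2[OF dyadic_cell_lmeasurable[of s w]]) (auto intro!: sets.Int dest: fmeasurableD)

lemma measure_Union_cells:
  assumes G: "G \<in> sets lebesgue" and I: "I \<subseteq> dyadic_labels s"
  shows "measure lebesgue (\<Union>w\<in>I. G \<inter> dyadic_cell s w)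
       = (\<Sum>w\<in>I. measure lebesgue (G \<inter> dyadic_cell s w :: (real^'m^'n) set))"
proof (rule measure_negligible_finite_Union_image)
  show "finite I" using I finite_dyadic_labels finite_subset by blast
  show "G \<inter> dyadic_cell s w \<in> lmeasurable" for w
    using G by (rule inter_dyadic_cell_lmeasurable)
  show "pairwise (\<lambda>x y. negligible (G \<inter> dyadic_cell s x \<inter> (G \<inter> dyadic_cell s y))) I"
    by (simp add: pairwise_def Int_left_commute Int_assoc dyadic_cells_disjoint)
qed

lemma measure_sum_cells:
  assumes "G \<in> sets lebesgue" "G \<subseteq> (half_open_cube :: (real^'m^'n) set)"
  shows "measure lebesgue G = (\<Sum>w\<in>dyadic_labels s. measure lebesgue (G \<inter> dyadic_cell s w))"
proof -
  have "G = (\<Union>w\<in>dyadic_labels s. G \<inter> dyadic_cell s w)"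
    using assms half_open_cube_Union_cells[of s] by blast
  then show ?thesis using measure_Union_cells[OF assms(1) order_refl] by metis
qed

text \<open>Comparing the measures of both sides: there are \<open>2^(s nm)\<close> labels of level \<open>s\<close>.\<close>

lemma card_dyadic_labels:
  "real (card (dyadic_labels s :: (int^'m^'n) set)) * (1/2^s)^DIM(real^'m^'n) = 1"
proof -
  have "1 = measure lebesgue (half_open_cube :: (real^'m^'n) set)"
    using measure_half_open_cube by simp
  also have "\<dots> = (\<Sum>w\<in>(dyadic_labels s :: (int^'m^'n) set).
                        measure lebesgue (half_open_cube \<inter> dyadic_cell s w))"
    by (rule measure_sum_cells) (simp_all add: half_open_cube_borel borel_imp_lebesgue)
  also have "\<dots> = (\<Sum>w\<in>(dyadic_labels s :: (int^'m^'n) set). measure lebesgue (dyadic_cell s w))"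
    by (intro sum.cong refl) (simp add: Int_absorb1 dyadic_cell_subset)
  finally show ?thesis by (simp add: measure_dyadic_cell)
qed

lemma floor_half: "\<lfloor>x::real\<rfloor> = \<lfloor>2*x\<rfloor> div 2"
proof -
  define a where "a = \<lfloor>2*x\<rfloor>"
  have "of_int a \<le> 2*x" "2*x < of_int a + 1" unfolding a_def by linarith+
  moreover have "real_of_int a = 2 * real_of_int (a div 2) + real_of_int (a mod 2)"
    by (metis of_int_add of_int_mult of_int_numeral div_mult_mod_eq add.commute mult.commute)
  moreover have "0 \<le> real_of_int (a mod 2)" "real_of_int (a mod 2) \<le> 1" by simp_all
  ultimately show ?thesis unfolding a_def[symmetric] by (simp add: floor_eq_iff)
qed

lemma dyadic_cell_nested:
  assumes "X \<in> dyadic_cell s w" "X \<in> dyadic_cell (Suc s) w'"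
  shows "dyadic_cell (Suc s) w' \<subseteq> dyadic_cell s w"
proof
  fix Y assume Y: "Y \<in> dyadic_cell (Suc s) w'"
  have "\<lfloor>2^s * Y$i$j\<rfloor> = \<lfloor>2^s * X$i$j\<rfloor>" for i j
    using Y assms(2) floor_half[of "2^s * Y$i$j"] floor_half[of "2^s * X$i$j"]
    by (simp add: dyadic_cell_def mult.assoc)
  then show "Y \<in> dyadic_cell s w" using assms(1) by (simp add: dyadic_cell_def)
qed

lemma dist_in_dyadic_cell:
  assumes "X \<in> dyadic_cell s w" "Y \<in> dyadic_cell s w"
  shows "dist X (Y :: real^'m^'n) \<le> real (CARD('n) * CARD('m)) / 2^s"
proof -
  have entry: "\<bar>(X - Y)$i$j\<bar> \<le> 1/2^s" for i j
  proof -
    have "of_int (w$i$j) \<le> 2^s * X$i$j \<and> 2^s * X$i$j < of_int (w$i$j) + 1"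
         "of_int (w$i$j) \<le> 2^s * Y$i$j \<and> 2^s * Y$i$j < of_int (w$i$j) + 1"
      using assms by (simp_all add: dyadic_cell_def floor_eq_iff)
    then have "\<bar>2^s * X$i$j - 2^s * Y$i$j\<bar> \<le> 1" by linarith
    then have "2^s * \<bar>X$i$j - Y$i$j\<bar> \<le> 1"
      by (simp add: abs_mult right_diff_distrib[symmetric])
    then show ?thesis by (simp add: field_simps)
  qed
  have "dist X Y \<le> (\<Sum>i\<in>UNIV. norm ((X - Y)$i))"
    unfolding dist_norm norm_vec_def by (rule L2_set_le_sum) simp
  also have "\<dots> \<le> (\<Sum>i\<in>UNIV. \<Sum>j\<in>UNIV. \<bar>(X - Y)$i$j\<bar>)"
    by (rule sum_mono) (metis norm_le_l1_cart real_norm_def)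
  also have "\<dots> \<le> (\<Sum>i\<in>(UNIV::'n set). \<Sum>j\<in>(UNIV::'m set). 1/2^s)"
    by (intro sum_mono entry)
  finally show ?thesis by simp
qed

section \<open>A density lemma\<close>

text \<open>The union of the level-\<open>s\<close> cells of the half-open cube that lie inside \<open>U\<close>; for open
  \<open>U\<close> these sets increase to \<open>U \<inter> [0,1)^{nm}\<close>.\<close>

definition inner_cells :: "(real^'m^'n) set \<Rightarrow> nat \<Rightarrow> (real^'m^'n) set" where
  "inner_cells U s = (\<Union>w\<in>{w\<in>dyadic_labels s. dyadic_cell s w \<subseteq> U}. dyadic_cell s w)"

lemma inner_cells_subset: "inner_cells U s \<subseteq> U \<inter> half_open_cube"
  using dyadic_cell_subset by (auto simp: inner_cells_def)

lemma inner_cells_lebesgue: "inner_cells U s \<in> sets lebesgue"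
proof -
  have "finite {w\<in>dyadic_labels s. dyadic_cell s w \<subseteq> U}"
    using finite_dyadic_labels[of s] by (rule finite_subset[rotated]) blast
  then show ?thesis
    unfolding inner_cells_def using dyadic_cell_lmeasurable by (intro sets.finite_UN) auto
qed

lemma incseq_inner_cells: "incseq (inner_cells U)"
proof (rule incseq_SucI, rule subsetI)
  fix s X assume "X \<in> inner_cells U s"
  then obtain w where w: "w \<in> dyadic_labels s" "dyadic_cell s w \<subseteq> U" "X \<in> dyadic_cell s w"
    by (auto simp: inner_cells_def)
  let ?w' = "\<chi> i j. \<lfloor>2^Suc s * X$i$j\<rfloor>"
  have "dyadic_cell (Suc s) ?w' \<subseteq> dyadic_cell s w"
    using dyadic_cell_nested[OF w(3) in_dyadic_cell] .
  moreover have "?w' \<in> dyadic_labels (Suc s)"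
    using dyadic_labels_of_cell in_dyadic_cell dyadic_cell_subset w by blast
  ultimately show "X \<in> inner_cells U (Suc s)"
    using w in_dyadic_cell[of X "Suc s"] by (auto simp: inner_cells_def)
qed

lemma open_covered_by_inner_cells:
  fixes U :: "(real^'m^'n) set"
  assumes "open U"
  shows "U \<inter> half_open_cube \<subseteq> (\<Union>s. inner_cells U s)"
proof
  fix X :: "real^'m^'n" assume X: "X \<in> U \<inter> half_open_cube"
  obtain r where r: "r > 0" "ball X r \<subseteq> U" using assms X by (meson IntD1 openE)
  obtain s where s: "real (CARD('n) * CARD('m)) / r < 2^s" using real_arch_pow[of 2] by auto
  let ?w = "\<chi> i j. \<lfloor>2^s * X$i$j\<rfloor>"
  have "dyadic_cell s ?w \<subseteq> U"
  proof
    fix Y assume "Y \<in> dyadic_cell s ?w"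
    then have "dist X Y \<le> real (CARD('n) * CARD('m)) / 2^s"
      using dist_in_dyadic_cell in_dyadic_cell by blast
    also have "\<dots> < r" using s r by (simp add: field_simps)
    finally show "Y \<in> U" using r by auto
  qed
  moreover have "?w \<in> dyadic_labels s" using X dyadic_labels_of_cell in_dyadic_cell by blast
  ultimately show "X \<in> (\<Union>s. inner_cells U s)"
    unfolding inner_cells_def using in_dyadic_cell[of X s] by blast
qed

lemma measure_le_from_inner_cells:
  assumes G: "G \<in> sets lebesgue" "G \<subseteq> U" "G \<subseteq> half_open_cube" and U: "open U"
    and le: "\<And>s. measure lebesgue (G \<inter> inner_cells U s) \<le> b"
  shows "measure lebesgue G \<le> b"
proof -
  have Gl: "G \<in> lmeasurable" by (rule fmeasurableI2[OF half_open_cube_lmeasurable G(3) G(1)])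
  have inc: "incseq (\<lambda>s. G \<inter> inner_cells U s)"
    using incseq_inner_cells[of U] by (auto simp: incseq_def)
  have "G = (\<Union>s. G \<inter> inner_cells U s)"
    using G open_covered_by_inner_cells[OF U] by blast
  then have "emeasure lebesgue G = emeasure lebesgue (\<Union>s. G \<inter> inner_cells U s)"
    by simp
  also have "\<dots> = (SUP s. emeasure lebesgue (G \<inter> inner_cells U s))"
    by (rule SUP_emeasure_incseq[symmetric, OF _ inc]) (use G(1) inner_cells_lebesgue in auto)
  also have "\<dots> \<le> ennreal b"
  proof (rule SUP_least)
    fix s
    have "G \<inter> inner_cells U s \<in> lmeasurable"
      by (rule fmeasurableI2[OF Gl]) (use G(1) inner_cells_lebesgue in auto)
    then show "emeasure lebesgue (G \<inter> inner_cells U s) \<le> ennreal b"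
      using le[of s] by (simp add: emeasure_eq_measure2 ennreal_leI)
  qed
  finally have "ennreal (measure lebesgue G) \<le> ennreal b"
    using Gl by (simp add: emeasure_eq_measure2)
  moreover have "0 \<le> b"
    using le[of 0] measure_nonneg[of lebesgue "G \<inter> inner_cells U 0"] by linarith
  ultimately show ?thesis by (simp add: ennreal_le_iff)
qed

lemma measure_inter_inner_cells_le:
  fixes G :: "(real^'m^'n) set"
  assumes G: "G \<in> sets lebesgue"
    and le: "\<And>s w. w \<in> dyadic_labels s \<Longrightarrow>
               measure lebesgue (G \<inter> dyadic_cell s w) \<le> c * measure lebesgue (dyadic_cell s w)"
  shows "measure lebesgue (G \<inter> inner_cells U s) \<le> c * measure lebesgue (inner_cells U s)"
proof -
  let ?I = "{w\<in>dyadic_labels s. dyadic_cell s w \<subseteq> U}"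
  have cells: "inner_cells U s = (\<Union>w\<in>?I. UNIV \<inter> dyadic_cell s w)"
    by (simp add: inner_cells_def)
  have "G \<inter> inner_cells U s = (\<Union>w\<in>?I. G \<inter> dyadic_cell s w)"
    by (auto simp: inner_cells_def)
  then have "measure lebesgue (G \<inter> inner_cells U s) = (\<Sum>w\<in>?I. measure lebesgue (G \<inter> dyadic_cell s w))"
    using measure_Union_cells[OF G] by simp
  also have "\<dots> \<le> (\<Sum>w\<in>?I. c * measure lebesgue (UNIV \<inter> dyadic_cell s w))"
    using le by (intro sum_mono) simp
  also have "\<dots> = c * measure lebesgue (inner_cells U s)"
    unfolding cells sum_distrib_left[symmetric]
    by (subst measure_Union_cells) auto
  finally show ?thesis .
qed

lemma outer_open_approximation:
  fixes G :: "(real^'m^'n) set"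
  assumes G: "G \<in> sets lebesgue" "G \<subseteq> half_open_cube" and \<delta>: "0 < \<delta>"
  obtains U where "open U" "G \<subseteq> U"
    "measure lebesgue (U \<inter> half_open_cube) \<le> measure lebesgue G + \<delta>"
proof -
  have Gl: "G \<in> lmeasurable" by (rule fmeasurableI2[OF half_open_cube_lmeasurable G(2) G(1)])
  obtain U where U: "open U" "G \<subseteq> U" "U - G \<in> lmeasurable"
      "emeasure lebesgue (U - G) < ennreal \<delta>"
    using sets_lebesgue_outer_open[OF G(1) \<delta>] by metis
  have "measure lebesgue (U - G) < \<delta>"
    using U(3,4) \<delta> by (simp add: emeasure_eq_measure2 ennreal_less_iff)
  moreover have "U \<inter> half_open_cube \<in> sets lebesgue"
    using U(1) by (intro inter_half_open_cube_lebesgue borel_open)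
  then have "measure lebesgue (U \<inter> half_open_cube) \<le> measure lebesgue (G \<union> (U - G))"
    by (intro measure_mono_fmeasurable fmeasurable.Un Gl U(3)) auto
  moreover have "measure lebesgue (G \<union> (U - G)) \<le> measure lebesgue G + measure lebesgue (U - G)"
    by (rule measure_Un_le) (use Gl U in auto)
  ultimately show ?thesis using that U(1,2) by fastforce
qed

lemma null_if_sparse_in_cells:
  fixes G :: "(real^'m^'n) set"
  assumes G: "G \<in> sets lebesgue" "G \<subseteq> half_open_cube" and c: "0 \<le> c" "c < 1"
    and le: "\<And>s w. w \<in> dyadic_labels s \<Longrightarrow>
               measure lebesgue (G \<inter> dyadic_cell s w) \<le> c * measure lebesgue (dyadic_cell s w)"
  shows "measure lebesgue G = 0"
proof -
  have "(1 - c) * measure lebesgue G \<le> 0 + \<delta>" if \<delta>: "0 < \<delta>" for \<delta>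
  proof -
    obtain U where U: "open U" "G \<subseteq> U"
        and UG: "measure lebesgue (U \<inter> half_open_cube) \<le> measure lebesgue G + \<delta>"
      using outer_open_approximation[OF G \<delta>] .
    have "measure lebesgue G \<le> c * (measure lebesgue G + \<delta>)"
    proof (rule measure_le_from_inner_cells[OF G(1) U(2) G(2) U(1)])
      fix s
      have "U \<inter> half_open_cube \<in> sets lebesgue"
        using U(1) by (intro inter_half_open_cube_lebesgue borel_open)
      then have "U \<inter> half_open_cube \<in> lmeasurable"
        by (rule fmeasurableI2[OF half_open_cube_lmeasurable, rotated]) simp
      then have "measure lebesgue (inner_cells U s) \<le> measure lebesgue (U \<inter> half_open_cube)"
        using inner_cells_subset inner_cells_lebesgue by (rule measure_mono_fmeasurable[rotated 2])
      then have "c * measure lebesgue (inner_cells U s) \<le> c * (measure lebesgue G + \<delta>)"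
        using UG c(1) by (intro mult_left_mono) auto
      then show "measure lebesgue (G \<inter> inner_cells U s) \<le> c * (measure lebesgue G + \<delta>)"
        using measure_inter_inner_cells_le[OF G(1) le] order_trans by blast
    qed
    moreover have "c * \<delta> \<le> \<delta>" using c \<delta> by (simp add: mult_left_le_one_le)
    ultimately show ?thesis by (simp add: algebra_simps)
  qed
  then have "(1 - c) * measure lebesgue G \<le> 0" by (rule field_le_epsilon)
  then show ?thesis using c measure_nonneg[of lebesgue G] by (simp add: mult_le_0_iff)
qed

section \<open>Zero-one law for dyadically translation invariant sets\<close>

lemma dyadic_cell_translate:
  assumes "X \<in> dyadic_cell s z"
  shows "X + (1/2^s) *\<^sub>R int_mat (w - z) \<in> dyadic_cell s w"
proof -
  have "2^s * (X + (1/2^s) *\<^sub>R int_mat (w - z))$i$j = 2^s * X$i$j + of_int (w$i$j - z$i$j)" for i j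
    by (simp add: algebra_simps)
  then show ?thesis using assms by (simp add: dyadic_cell_def)
qed

lemma measure_in_cells_translation_invariant:
  fixes G :: "(real^'m^'n) set"
  assumes G: "G \<in> sets lebesgue" "G \<subseteq> half_open_cube"
    and inv: "\<And>X s W. X \<in> G \<Longrightarrow> frac_mat (X + (1/2^s) *\<^sub>R int_mat W) \<in> G"
    and w: "w \<in> dyadic_labels s"
  shows "measure lebesgue (G \<inter> dyadic_cell s z) \<le> measure lebesgue (G \<inter> dyadic_cell s w)"
proof -
  let ?a = "(1/2^s) *\<^sub>R int_mat (w - z)"
  have GC: "G \<inter> dyadic_cell s w \<in> lmeasurable"
    using G(1) by (rule inter_dyadic_cell_lmeasurable)
  have sub: "(\<lambda>X. ?a + X) ` (G \<inter> dyadic_cell s z) \<subseteq> G \<inter> dyadic_cell s w"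
  proof
    fix Y assume "Y \<in> (\<lambda>X. ?a + X) ` (G \<inter> dyadic_cell s z)"
    then obtain X where X: "X \<in> G" "X \<in> dyadic_cell s z" and Y: "Y = X + ?a"
      by (auto simp: add.commute)
    have "Y \<in> dyadic_cell s w" using dyadic_cell_translate[OF X(2)] Y by simp
    moreover have "frac_mat Y \<in> G" using inv[OF X(1), of s "w - z"] Y by simp
    ultimately show "Y \<in> G \<inter> dyadic_cell s w"
      using frac_mat_id[of Y] dyadic_cell_subset[OF w] by auto
  qed
  have "measure lebesgue (G \<inter> dyadic_cell s z)
      = measure lebesgue ((\<lambda>X. ?a + X) ` (G \<inter> dyadic_cell s z))"
    by (rule measure_translation[symmetric])
  also have "\<dots> \<le> measure lebesgue (G \<inter> dyadic_cell s w)"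
    using inter_dyadic_cell_lmeasurable[OF G(1)]
    by (intro measure_mono_fmeasurable[OF sub _ GC] lebesgue_sets_translation fmeasurableD)
  finally show ?thesis .
qed

lemma measure_in_cells_equidistributed:
  fixes G :: "(real^'m^'n) set"
  assumes G: "G \<in> sets lebesgue" "G \<subseteq> half_open_cube"
    and inv: "\<And>X s W. X \<in> G \<Longrightarrow> frac_mat (X + (1/2^s) *\<^sub>R int_mat W) \<in> G"
    and z: "z \<in> dyadic_labels s"
  shows "measure lebesgue (G \<inter> dyadic_cell s z) = measure lebesgue G * measure lebesgue (dyadic_cell s z)"
proof -
  have "measure lebesgue G = (\<Sum>w\<in>dyadic_labels s. measure lebesgue (G \<inter> dyadic_cell s w))"
    by (rule measure_sum_cells[OF G])
  also have "\<dots> = (\<Sum>w\<in>(dyadic_labels s :: (int^'m^'n) set). measure lebesgue (G \<inter> dyadic_cell s z))"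
    using measure_in_cells_translation_invariant[OF G inv] z by (intro sum.cong refl order.antisym)
  finally have "measure lebesgue G
      = real (card (dyadic_labels s :: (int^'m^'n) set)) * measure lebesgue (G \<inter> dyadic_cell s z)"
    by simp
  then show ?thesis
    using card_dyadic_labels[of s, where 'm='m and 'n='n] by (simp add: measure_dyadic_cell)
qed

lemma zero_one_dyadic_translation_invariant:
  fixes G :: "(real^'m^'n) set"
  assumes G: "G \<in> sets lebesgue" "G \<subseteq> half_open_cube"
    and inv: "\<And>X s W. X \<in> G \<Longrightarrow> frac_mat (X + (1/2^s) *\<^sub>R int_mat W) \<in> G"
  shows "measure lebesgue G = 0 \<or> measure lebesgue G = 1"
proof -
  have "measure lebesgue G \<le> 1"
    using measure_mono_fmeasurable[OF G(2) G(1) half_open_cube_lmeasurable]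
    by (simp add: measure_half_open_cube)
  moreover have "measure lebesgue G = 0" if "measure lebesgue G < 1"
    using null_if_sparse_in_cells[OF G measure_nonneg that]
      measure_in_cells_equidistributed[OF G inv] by simp
  ultimately show ?thesis by linarith
qed

section \<open>Zero-one law for sets invariant under a doubling map\<close>

lemma measure_piecewise_translation:
  fixes A :: "'a::euclidean_space set" and P :: "'i \<Rightarrow> 'a set"
  assumes Z: "finite Z" and A: "A = (\<Union>z\<in>Z. P z)" and P: "\<And>z. z \<in> Z \<Longrightarrow> P z \<in> lmeasurable"
    and disj: "\<And>z z'. z \<in> Z \<Longrightarrow> z' \<in> Z \<Longrightarrow> z \<noteq> z' \<Longrightarrow> P z \<inter> P z' = {}"
    and f: "\<And>z x. z \<in> Z \<Longrightarrow> x \<in> P z \<Longrightarrow> f x = t z + x" and inj: "inj_on f A"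
  shows "f ` A \<in> lmeasurable \<and> measure lebesgue (f ` A) = measure lebesgue A"
proof -
  have img: "f ` P z = (\<lambda>x. t z + x) ` P z" if "z \<in> Z" for z
    using f[OF that] by (rule image_cong[OF refl])
  have img_l: "f ` P z \<in> lmeasurable" if "z \<in> Z" for z
    unfolding img[OF that] by (rule measurable_translation[OF P[OF that]])
  have fA: "f ` A = (\<Union>z\<in>Z. f ` P z)" using A by auto
  have "measure lebesgue (f ` A) = (\<Sum>z\<in>Z. measure lebesgue (f ` P z))"
    unfolding fA
  proof (rule measure_negligible_finite_Union_image[OF Z img_l])
    have "f ` P z \<inter> f ` P z' = {}" if "z \<in> Z" "z' \<in> Z" "z \<noteq> z'" for z z'
      using inj_on_image_Int[OF inj, of "P z" "P z'"] disj[OF that] that A by auto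
    then show "pairwise (\<lambda>z z'. negligible (f ` P z \<inter> f ` P z')) Z"
      by (simp add: pairwise_def)
  qed
  also have "\<dots> = (\<Sum>z\<in>Z. measure lebesgue (P z))"
    using img measure_translation by (intro sum.cong refl) simp
  also have "\<dots> = measure lebesgue A"
    unfolding A using disj
    by (intro measure_negligible_finite_Union_image[symmetric, OF Z P]) (auto simp: pairwise_def)
  finally show ?thesis
    using Z img_l unfolding fA by (auto intro: fmeasurable.finite_UN)
qed

text \<open>On a translate of the half-open cube, reduction modulo 1 is injective and, being a
  translation on each of the finitely many regions where the integer part is constant,
  measure preserving.\<close>

lemma measure_frac_mat_image:
  fixes A :: "(real^'m^'n) set" and b :: "real^'m^'n"
  assumes A: "A \<in> sets lebesgue" "A \<subseteq> (\<lambda>Y. b + Y) ` half_open_cube"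
  shows "frac_mat ` A \<in> lmeasurable \<and> measure lebesgue (frac_mat ` A) = measure lebesgue A"
proof (rule measure_piecewise_translation)
  have bnd: "b$i$j \<le> X$i$j \<and> X$i$j < b$i$j + 1" if "X \<in> A" for X i j
    using A(2) that by (auto simp: half_open_cube_def)
  define Z where "Z = {z :: int^'m^'n. \<forall>i j. z$i$j \<in> {\<lfloor>b$i$j\<rfloor>, \<lfloor>b$i$j\<rfloor> + 1}}"
  have "Z \<subseteq> {z. \<forall>i j. z$i$j \<in> (\<Union>i j. {\<lfloor>b$i$j\<rfloor>, \<lfloor>b$i$j\<rfloor> + 1})}"
    by (auto simp: Z_def)
  then show "finite Z" by (rule finite_subset) (intro finite_matrix_entries, simp)
  have "floor_mat X \<in> Z" if "X \<in> A" for X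
  proof -
    have "\<lfloor>X$i$j\<rfloor> \<in> {\<lfloor>b$i$j\<rfloor>, \<lfloor>b$i$j\<rfloor> + 1}" for i j
    proof -
      have "\<lfloor>b$i$j\<rfloor> \<le> \<lfloor>X$i$j\<rfloor>" "\<lfloor>X$i$j\<rfloor> \<le> \<lfloor>b$i$j\<rfloor> + 1"
        using bnd[OF that, of i j] by (simp add: floor_mono, linarith)
      then show ?thesis by auto
    qed
    then show ?thesis by (simp add: Z_def floor_mat_def)
  qed
  then show "A = (\<Union>z\<in>Z. A \<inter> {X. floor_mat X = z})" by auto
  show "A \<inter> {X. floor_mat X = z} \<in> lmeasurable" for z
  proof -
    have "{X :: real^'m^'n. floor_mat X = z} = {X. \<forall>i j. \<lfloor>X$i$j\<rfloor> = z$i$j}"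
      by (auto simp: floor_mat_def vec_eq_iff)
    also have "\<dots> \<in> sets borel" by measurable
    finally have "{X :: real^'m^'n. floor_mat X = z} \<in> sets lebesgue" by (rule borel_imp_lebesgue)
    then have "A \<inter> {X. floor_mat X = z} \<in> sets lebesgue" by (intro sets.Int A(1))
    moreover have "A \<in> lmeasurable"
      by (rule fmeasurableI2[OF measurable_translation[OF half_open_cube_lmeasurable] A(2) A(1)])
    ultimately show ?thesis using fmeasurableI2[OF _ Int_lower1] by blast
  qed
  show "frac_mat X = - int_mat z + X" if "X \<in> A \<inter> {X. floor_mat X = z}" for z X
    using that by (simp add: frac_mat_eq)
  show "inj_on frac_mat A"
  proof (rule inj_onI)
    fix X X' assume X: "X \<in> A" "X' \<in> A" "frac_mat X = frac_mat X'"
    have "X$i$j = X'$i$j" for i j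
    proof -
      have "frac (X$i$j) = frac (X'$i$j)" using X(3) by (simp add: frac_mat_def vec_eq_iff)
      then have "X$i$j - X'$i$j = of_int (\<lfloor>X$i$j\<rfloor> - \<lfloor>X'$i$j\<rfloor>)"
        by (simp add: frac_def)
      moreover have "\<bar>X$i$j - X'$i$j\<bar> < 1" using bnd[OF X(1), of i j] bnd[OF X(2), of i j] by linarith
      ultimately have "\<bar>real_of_int (\<lfloor>X$i$j\<rfloor> - \<lfloor>X'$i$j\<rfloor>)\<bar> < 1" by simp
      then have "\<lfloor>X$i$j\<rfloor> - \<lfloor>X'$i$j\<rfloor> = 0" by linarith
      with \<open>X$i$j - X'$i$j = _\<close> show ?thesis by simp
    qed
    then show "X = X'" by (simp add: vec_eq_iff)
  qed
qed auto

lemma sets_lebesgue_affine_image: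
  fixes S :: "'a::euclidean_space set"
  assumes S: "S \<in> sets lebesgue" and r: "r \<noteq> 0"
  shows "(\<lambda>x. r *\<^sub>R x + d) ` S \<in> sets lebesgue"
proof -
  have "(\<lambda>x. r *\<^sub>R x) ` S = (\<lambda>x. (1/r) *\<^sub>R x) -` S \<inter> space lebesgue"
    using r by (force simp: image_iff)
  also have "\<dots> \<in> sets lebesgue"
    by (rule measurable_sets[OF lebesgue_measurable_scaling S])
  finally have "(\<lambda>x. d + x) ` (\<lambda>x. r *\<^sub>R x) ` S \<in> sets lebesgue"
    by (rule lebesgue_sets_translation)
  then show ?thesis by (simp add: image_image add.commute)
qed

lemma frac_mat_double: "frac_mat (2 *\<^sub>R frac_mat V + c) = frac_mat (2 *\<^sub>R V + c)"
proof -
  have "frac (2 * frac x + y) = frac (2 * x + y)" for x y :: real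
  proof -
    have "2 * frac x + y = (2 * x + y) + of_int (- 2 * \<lfloor>x\<rfloor>)" by (simp add: frac_def algebra_simps)
    then show ?thesis by (simp only: frac_add_of_int_right)
  qed
  then show ?thesis by (simp add: frac_mat_def vec_eq_iff)
qed

text \<open>Invariance under the affine doubling map \<open>T X = frac (2X + c)\<close> gives invariance
  under its iterates \<open>T^s X = frac (2^s X + (2^s - 1) c)\<close>.\<close>

lemma doubling_iterate_invariant:
  assumes G: "G \<subseteq> half_open_cube" and inv: "\<And>X. X \<in> G \<Longrightarrow> frac_mat (2 *\<^sub>R X + c) \<in> G"
    and X: "X \<in> G"
  shows "frac_mat ((2^s) *\<^sub>R X + (2^s - 1) *\<^sub>R c) \<in> G"
proof (induction s)
  case 0
  then show ?case using X G frac_mat_id[of X] by auto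
next
  case (Suc s)
  have "2 *\<^sub>R ((2^s) *\<^sub>R X + (2^s - 1) *\<^sub>R c) + c = (2^Suc s) *\<^sub>R X + (2^Suc s - 1) *\<^sub>R c"
    by (simp add: vec_eq_iff algebra_simps)
  then have "frac_mat (2 *\<^sub>R frac_mat ((2^s) *\<^sub>R X + (2^s - 1) *\<^sub>R c) + c)
      = frac_mat ((2^Suc s) *\<^sub>R X + (2^Suc s - 1) *\<^sub>R c)"
    by (simp only: frac_mat_double)
  then show ?case using inv[OF Suc] by simp
qed

text \<open>A set invariant under the doubling map \<open>T\<close> is nowhere denser than on average: the
  iterate \<open>T^s\<close> blows a level-\<open>s\<close> cell up to a translate of the half-open cube, so it maps
  the part of \<open>G\<close> in the cell, magnified by \<open>2^(s nm)\<close> in measure, into \<open>G\<close>.\<close>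

lemma measure_in_cells_doubling_invariant:
  fixes G :: "(real^'m^'n) set"
  assumes G: "G \<in> sets lebesgue" "G \<subseteq> half_open_cube"
    and inv: "\<And>X. X \<in> G \<Longrightarrow> frac_mat (2 *\<^sub>R X + c) \<in> G"
  shows "measure lebesgue (G \<inter> dyadic_cell s w) \<le> measure lebesgue G * measure lebesgue (dyadic_cell s w)"
proof -
  define A where "A = G \<inter> dyadic_cell s w"
  define \<sigma> where "\<sigma> X = (2^s) *\<^sub>R X + (2^s - 1) *\<^sub>R c" for X :: "real^'m^'n"
  have "A \<in> sets lebesgue" unfolding A_def
    by (rule fmeasurableD[OF inter_dyadic_cell_lmeasurable[OF G(1)]])
  then have "\<sigma> ` A \<in> sets lebesgue" unfolding \<sigma>_def by (rule sets_lebesgue_affine_image) simp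
  moreover have "\<sigma> ` A \<subseteq> (\<lambda>Y. (int_mat w + (2^s - 1) *\<^sub>R c) + Y) ` half_open_cube"
    by (auto simp: A_def \<sigma>_def dyadic_cell_image algebra_simps)
  ultimately have fr: "frac_mat ` \<sigma> ` A \<in> lmeasurable"
      "measure lebesgue (frac_mat ` \<sigma> ` A) = measure lebesgue (\<sigma> ` A)"
    using measure_frac_mat_image by blast+
  have "(2^s) ^ DIM(real^'m^'n) * measure lebesgue A = measure lebesgue (\<sigma> ` A)"
    unfolding \<sigma>_def by (simp add: measure_lebesgue_affine)
  also have "\<dots> \<le> measure lebesgue G"
    unfolding fr(2)[symmetric] using doubling_iterate_invariant[OF G(2) inv] fr(1)
    by (intro measure_mono_fmeasurable fmeasurableD fmeasurableI2[OF half_open_cube_lmeasurable G(2) G(1)])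
       (auto simp: A_def \<sigma>_def)
  finally show ?thesis
    by (simp add: A_def measure_dyadic_cell power_one_over field_simps)
qed

lemma zero_one_doubling_invariant:
  fixes G :: "(real^'m^'n) set"
  assumes G: "G \<in> sets lebesgue" "G \<subseteq> half_open_cube"
    and inv: "\<And>X. X \<in> G \<Longrightarrow> frac_mat (2 *\<^sub>R X + c) \<in> G"
  shows "measure lebesgue G = 0 \<or> measure lebesgue G = 1"
proof -
  have "measure lebesgue G \<le> 1"
    using measure_mono_fmeasurable[OF G(2) G(1) half_open_cube_lmeasurable]
    by (simp add: measure_half_open_cube)
  moreover have "measure lebesgue G = 0" if "measure lebesgue G < 1"
    using null_if_sparse_in_cells[OF G measure_nonneg that]
      measure_in_cells_doubling_invariant[OF G inv] by blast
  ultimately show ?thesis by linarith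
qed

lemma Gcd_eq_1_transfer:
  fixes S S' :: "int set"
  assumes S: "Gcd S = 1" and S': "\<exists>x\<in>S'. x \<noteq> 0"
    and common: "\<And>d. prime d \<Longrightarrow> \<forall>x\<in>S'. d dvd x \<Longrightarrow> \<forall>x\<in>S. d dvd x"
  shows "Gcd S' = 1"
proof (rule ccontr)
  assume "Gcd S' \<noteq> 1"
  then have "\<not> is_unit (Gcd S')" by (metis is_unit_normalize normalize_Gcd)
  moreover have "Gcd S' \<noteq> 0" using S' by (auto simp: Gcd_0_iff)
  ultimately obtain d where d: "prime d" "d dvd Gcd S'" using prime_divisor_exists by blast
  then have "\<forall>x\<in>S. d dvd x" using common Gcd_dvd dvd_trans by blast
  then have "d dvd 1" using S by (metis Gcd_greatest)
  then show False using d(1) by (simp add: not_prime_unit)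
qed

lemma admissible_transfer:
  fixes p p' :: "int^'m" and q :: "int^'n"
  assumes adm: "admissible v p q" and q: "q \<noteq> 0"
    and tr: "\<And>d j. prime d \<Longrightarrow> \<forall>r. d dvd q$r \<Longrightarrow> d dvd p'$j \<Longrightarrow> d dvd p$j"
  shows "admissible v p' q"
proof -
  obtain r where r: "q$r \<noteq> 0" using q by (auto simp: vec_eq_iff)
  show ?thesis
  proof (cases v)
    case Plain
    then show ?thesis by (simp add: admissible_def)
  next
    case Coprime
    let ?S = "range (\<lambda>j. p $ j) \<union> range (\<lambda>i. q $ i)"
    have "Gcd (range (\<lambda>j. p' $ j) \<union> range (\<lambda>i. q $ i)) = 1"
    proof (rule Gcd_eq_1_transfer[of ?S])
      show "Gcd ?S = 1" using adm Coprime by (simp add: admissible_def)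
      show "\<exists>x\<in>range (\<lambda>j. p' $ j) \<union> range (\<lambda>i. q $ i). x \<noteq> 0" using r by auto
      fix d :: int assume d: "prime d" "\<forall>x\<in>range (\<lambda>j. p' $ j) \<union> range (\<lambda>i. q $ i). d dvd x"
      then show "\<forall>x\<in>?S. d dvd x" using tr[OF d(1)] by auto
    qed
    then show ?thesis using Coprime by (simp add: admissible_def)
  next
    case CoprimeEach
    have "Gcd (insert (p' $ j) (range (\<lambda>i. q $ i))) = 1" for j
    proof (rule Gcd_eq_1_transfer[of "insert (p $ j) (range (\<lambda>i. q $ i))"])
      show "Gcd (insert (p $ j) (range (\<lambda>i. q $ i))) = 1"
        using adm CoprimeEach by (simp add: admissible_def)
      show "\<exists>x\<in>insert (p' $ j) (range (\<lambda>i. q $ i)). x \<noteq> 0" using r by auto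
      fix d :: int assume d: "prime d" "\<forall>x\<in>insert (p' $ j) (range (\<lambda>i. q $ i)). d dvd x"
      then show "\<forall>x\<in>insert (p $ j) (range (\<lambda>i. q $ i)). d dvd x" using tr[OF d(1)] by auto
    qed
    then show ?thesis using CoprimeEach by (simp add: admissible_def)
  qed
qed

lemma prime_dvd_div_pow2:
  fixes d c :: int
  assumes d: "prime d" "d \<noteq> 2" and dc: "d dvd c" and pc: "2^t dvd c"
  shows "d dvd c div 2^t"
proof -
  have "d dvd 2^t * (c div 2^t)" using dc pc by simp
  moreover have "\<not> d dvd 2^t"
    using d prime_dvd_power[of d 2 t] prime_ge_2_int[of d] zdvd_imp_le[of d 2] by auto
  ultimately show ?thesis using d(1) prime_dvd_mult_iff by blast
qed

lemma prime_dvd_after_doubling: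
  fixes c x y d :: int
  assumes c: "2^t dvd c" "\<not> 2^(t+1) dvd c" and d: "prime d" "d dvd c" "d dvd y"
    and dv: "d dvd 2 * x - c div 2^t + y"
  shows "d dvd x"
proof -
  have h: "d dvd 2 * x - c div 2^t" using dvd_diff[OF dv d(3)] by simp
  have odd: "\<not> 2 dvd c div 2^t"
  proof
    assume "2 dvd c div 2^t"
    then obtain k where k: "c div 2^t = 2 * k" by blast
    have "c = 2^t * (c div 2^t)" using c(1) by simp
    then have "c = 2^(t+1) * k" using k by simp
    then show False using c(2) by simp
  qed
  show ?thesis
  proof (cases "d = 2")
    case True
    have "2 dvd 2 * x - (2 * x - c div 2^t)" using h True by (intro dvd_diff) simp_all
    then show ?thesis using odd by simp
  next
    case False
    have "d dvd c div 2^t" using prime_dvd_div_pow2[OF d(1) False d(2) c(1)] .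
    then have "d dvd (2 * x - c div 2^t) + c div 2^t" by (rule dvd_add[OF h])
    then have "d dvd 2 * x" by simp
    moreover have "\<not> d dvd 2" using False d(1) prime_ge_2_int[of d] zdvd_imp_le[of d 2] by auto
    ultimately show ?thesis using d(1) prime_dvd_mult_iff by blast
  qed
qed

lemma prime_dvd_div_pow2_of_even:
  fixes c d :: int
  assumes c: "2^(s+1) dvd c" and d: "prime d" "d dvd c"
  shows "d dvd c div 2^s"
proof (cases "d = 2")
  case True
  obtain k where "c = 2^(s+1) * k" using c by blast
  then show ?thesis using True by simp
next
  case False
  have "(2::int)^s dvd 2^(s+1)" by (rule le_imp_power_dvd) simp
  then have "2^s dvd c" using c by (rule dvd_trans)
  then show ?thesis by (rule prime_dvd_div_pow2[OF d(1) False d(2)])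
qed

lemma sup_norm_less: "sup_norm (v :: real^'m) < r \<longleftrightarrow> (\<forall>j. \<bar>v$j\<bar> < r)"
  unfolding sup_norm_def by (subst Max_less_iff) auto

definition solutions ::
    "variant \<Rightarrow> (int^'n \<Rightarrow> real) \<Rightarrow> nat \<Rightarrow> (int^'n \<Rightarrow> bool) \<Rightarrow> real^'m^'n \<Rightarrow> ((int^'m) \<times> (int^'n)) set"
  where "solutions v \<Psi> k P X = {(p, q). q \<noteq> 0 \<and> admissible v p q \<and> P q \<and>
      sup_norm (row_times q X + (\<chi> j. real_of_int (p $ j))) < real k * \<Psi> q}"

lemma approx_set_eq_solutions:
  "approx_set v (\<lambda>q. real k * \<Psi> q) = {X \<in> unit_cube. infinite (solutions v \<Psi> k (\<lambda>_. True) X)}"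
  by (simp add: approx_set_def solutions_def)

lemma infinite_solutions_mono:
  assumes "infinite (solutions v \<Psi> k P X)" and "\<And>q. P q \<Longrightarrow> P' q"
  shows "infinite (solutions v \<Psi> k P' X)"
proof -
  have "solutions v \<Psi> k P X \<subseteq> solutions v \<Psi> k P' X" using assms(2) by (auto simp: solutions_def)
  then show ?thesis using assms(1) finite_subset by blast
qed

text \<open>If \<open>(p, q)\<close> solves \<open>(*)\<close> at \<open>X\<close>, then \<open>(p', q)\<close> with the numerator below solves it,
  with the bound scaled by \<open>a\<close>, at \<open>frac (a X + C)\<close>, where \<open>Z = floor (a X + C)\<close> and
  \<open>e = q C\<close> must be integral.\<close>

definition shifted_numerator :: "int \<Rightarrow> ('m \<Rightarrow> int) \<Rightarrow> int^'m^'n \<Rightarrow> int^'m \<Rightarrow> int^'n \<Rightarrow> int^'m" where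
  "shifted_numerator a e Z p q = (\<chi> j. a * p$j - e j + (\<Sum>i\<in>UNIV. q$i * Z$i$j))"

lemma row_times_frac_affine:
  fixes a :: int and C X :: "real^'m^'n" and q :: "int^'n" and p :: "int^'m"
  assumes e: "\<And>j. (\<Sum>i\<in>UNIV. real_of_int (q$i) * C$i$j) = real_of_int (e j)"
  defines "p' \<equiv> shifted_numerator a e (floor_mat (of_int a *\<^sub>R X + C)) p q"
  shows "row_times q (frac_mat (of_int a *\<^sub>R X + C)) + (\<chi> j. real_of_int (p' $ j))
       = of_int a *\<^sub>R (row_times q X + (\<chi> j. real_of_int (p $ j)))"
proof (rule iffD2[OF vec_eq_iff], rule allI)
  fix j
  let ?Z = "floor_mat (of_int a *\<^sub>R X + C)"
  have fr: "frac_mat (of_int a *\<^sub>R X + C) $ i $ j = of_int a * X$i$j + C$i$j - of_int (?Z$i$j)" for i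
    by (simp add: frac_mat_def floor_mat_def frac_def)
  have "(row_times q (frac_mat (of_int a *\<^sub>R X + C)) + (\<chi> j. real_of_int (p' $ j)))$j
      = (\<Sum>i\<in>UNIV. real_of_int (q$i) * (of_int a * X$i$j + C$i$j - of_int (?Z$i$j)))
        + (of_int a * of_int (p$j) - of_int (e j) + (\<Sum>i\<in>UNIV. of_int (q$i) * of_int (?Z$i$j)))"
    by (simp add: row_times_def fr p'_def shifted_numerator_def)
  also have "\<dots> = of_int a * (\<Sum>i\<in>UNIV. real_of_int (q$i) * X$i$j)
        + (\<Sum>i\<in>UNIV. real_of_int (q$i) * C$i$j) - (\<Sum>i\<in>UNIV. real_of_int (q$i) * of_int (?Z$i$j))
        + (of_int a * of_int (p$j) - of_int (e j) + (\<Sum>i\<in>UNIV. of_int (q$i) * of_int (?Z$i$j)))"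
    by (simp add: algebra_simps sum.distrib sum_subtractf sum_distrib_left)
  also have "\<dots> = (of_int a *\<^sub>R (row_times q X + (\<chi> j. real_of_int (p $ j))))$j"
    using e[of j] by (simp add: row_times_def algebra_simps)
  finally show "(row_times q (frac_mat (of_int a *\<^sub>R X + C)) + (\<chi> j. real_of_int (p' $ j)))$j
      = (of_int a *\<^sub>R (row_times q X + (\<chi> j. real_of_int (p $ j))))$j" .
qed

lemma solution_transport:
  fixes X C :: "real^'m^'n" and a :: int
  assumes pq: "(p, q) \<in> solutions v \<Psi> k P X" and a: "a > 0"
    and e: "\<And>j. (\<Sum>i\<in>UNIV. real_of_int (q$i) * C$i$j) = real_of_int (e j)"
    and adm: "admissible v p q \<Longrightarrow>
      admissible v (shifted_numerator a e (floor_mat (of_int a *\<^sub>R X + C)) p q) q"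
  shows "(shifted_numerator a e (floor_mat (of_int a *\<^sub>R X + C)) p q, q)
    \<in> solutions v \<Psi> (nat a * k) P (frac_mat (of_int a *\<^sub>R X + C))"
proof -
  let ?p' = "shifted_numerator a e (floor_mat (of_int a *\<^sub>R X + C)) p q"
  have s: "q \<noteq> 0" "admissible v p q" "P q"
      "\<And>j. \<bar>(row_times q X + (\<chi> j. real_of_int (p $ j)))$j\<bar> < real k * \<Psi> q"
    using pq by (auto simp: solutions_def sup_norm_less)
  have "\<bar>(row_times q (frac_mat (of_int a *\<^sub>R X + C)) + (\<chi> j. real_of_int (?p' $ j)))$j\<bar>
      < real (nat a * k) * \<Psi> q" for j
    using s(4)[of j] a unfolding row_times_frac_affine[OF e] by (simp add: abs_mult)
  then show ?thesis using s adm by (simp add: solutions_def sup_norm_less)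
qed

lemma infinite_solutions_transport:
  fixes X C :: "real^'m^'n" and a :: int
  assumes inf: "infinite (solutions v \<Psi> k P X)" and a: "a > 0"
    and e: "\<And>q j. P q \<Longrightarrow> (\<Sum>i\<in>UNIV. real_of_int (q$i) * C$i$j) = real_of_int (E q j)"
    and adm: "\<And>p q. P q \<Longrightarrow> q \<noteq> 0 \<Longrightarrow> admissible v p q \<Longrightarrow>
        admissible v (shifted_numerator a (E q) (floor_mat (of_int a *\<^sub>R X + C)) p q) q"
  shows "infinite (solutions v \<Psi> (nat a * k) P (frac_mat (of_int a *\<^sub>R X + C)))"
proof -
  define f where "f pq = (shifted_numerator a (E (snd pq)) (floor_mat (of_int a *\<^sub>R X + C))
      (fst pq) (snd pq), snd pq)" for pq :: "(int^'m) \<times> (int^'n)"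
  have "f ` solutions v \<Psi> k P X \<subseteq> solutions v \<Psi> (nat a * k) P (frac_mat (of_int a *\<^sub>R X + C))"
  proof
    fix y assume "y \<in> f ` solutions v \<Psi> k P X"
    then obtain p q where pq: "(p, q) \<in> solutions v \<Psi> k P X" and y: "y = f (p, q)" by auto
    have "P q" "q \<noteq> 0" using pq by (auto simp: solutions_def)
    then show "y \<in> solutions v \<Psi> (nat a * k) P (frac_mat (of_int a *\<^sub>R X + C))"
      unfolding y f_def using solution_transport[OF pq a e adm] by simp
  qed
  moreover have "inj f"
  proof (rule injI)
    fix x y assume "f x = f y"
    moreover from this have sn: "snd x = snd y" by (simp add: f_def)
    ultimately have "fst x = fst y"
      using a by (simp add: f_def shifted_numerator_def vec_eq_iff)
    with sn show "x = y" by (simp add: prod_eq_iff)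
  qed
  moreover have "infinite (f ` solutions v \<Psi> k P X)"
    using inf finite_imageD inj_on_subset by (metis subset_UNIV \<open>inj f\<close>)
  ultimately show ?thesis using finite_subset by blast
qed

section \<open>Splitting by the 2-adic valuation of \<open>q\<close>\<close>

text \<open>The level sets collect the points with infinitely many solutions of a fixed 2-adic type
  (for some multiple \<open>k\<Psi>\<close>); \<open>level_shift t i\<close> is the translation part of the doubling map
  under which the level set \<open>(t, i)\<close> is invariant.\<close>

definition pow2_divides :: "nat \<Rightarrow> int^'n \<Rightarrow> bool" where
  "pow2_divides s q \<longleftrightarrow> (\<forall>r. 2^s dvd q$r)"

definition exact_pow2_at :: "nat \<Rightarrow> 'n \<Rightarrow> int^'n \<Rightarrow> bool" where
  "exact_pow2_at t i q \<longleftrightarrow> pow2_divides t q \<and> \<not> 2^(t+1) dvd q$i"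

definition valuation_level_set :: "variant \<Rightarrow> (int^'n \<Rightarrow> real) \<Rightarrow> nat \<Rightarrow> 'n \<Rightarrow> (real^'m^'n) set" where
  "valuation_level_set v \<Psi> t i =
    (\<Union>k\<in>{1..}. {X \<in> unit_cube. infinite (solutions v \<Psi> k (exact_pow2_at t i) X)})"

definition unbounded_valuation_set :: "variant \<Rightarrow> (int^'n \<Rightarrow> real) \<Rightarrow> (real^'m^'n) set" where
  "unbounded_valuation_set v \<Psi> =
    (\<Union>k\<in>{1..}. {X \<in> unit_cube. \<forall>s. infinite (solutions v \<Psi> k (pow2_divides s) X)})"

definition level_shift :: "nat \<Rightarrow> 'n \<Rightarrow> real^'m^'n" where
  "level_shift t i = (\<chi> r j. if r = i then 1/2^t else 0)"

text \<open>Invariance under \<open>X \<mapsto> frac (2X + level_shift t i)\<close>: for \<open>q\<close> of type \<open>(t, i)\<close> the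
  vector \<open>q level_shift t i\<close> is the integer \<open>q$i / 2^t\<close> in each coordinate, and coprimality
  survives since \<open>q$i / 2^t\<close> is odd.  The approximation constant doubles.\<close>

lemma valuation_level_set_doubling_invariant:
  fixes X :: "real^'m^'n"
  assumes X: "X \<in> valuation_level_set v \<Psi> t i"
  shows "frac_mat (2 *\<^sub>R X + level_shift t i) \<in> valuation_level_set v \<Psi> t i"
proof -
  obtain k where k: "k \<ge> 1" "infinite (solutions v \<Psi> k (exact_pow2_at t i) X)"
    using X by (auto simp: valuation_level_set_def)
  let ?Z = "floor_mat (of_int 2 *\<^sub>R X + level_shift t i)"
  have "infinite (solutions v \<Psi> (nat 2 * k) (exact_pow2_at t i) (frac_mat (of_int 2 *\<^sub>R X + level_shift t i)))"
  proof (rule infinite_solutions_transport[OF k(2), where E = "\<lambda>q j. q$i div 2^t"])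
    fix q :: "int^'n" and j assume q: "exact_pow2_at t i q"
    have "(\<Sum>r\<in>UNIV. real_of_int (q$r) * level_shift t i $ r $ j)
        = (\<Sum>r\<in>UNIV. if r = i then real_of_int (q$r) / 2^t else 0)"
      by (rule sum.cong) (auto simp: level_shift_def)
    also have "\<dots> = real_of_int (q$i) / 2^t" by simp
    also have "\<dots> = real_of_int (q$i div 2^t)"
      using q by (simp add: real_of_int_div exact_pow2_at_def pow2_divides_def)
    finally show "(\<Sum>r\<in>UNIV. real_of_int (q$r) * level_shift t i $ r $ j) = real_of_int (q$i div 2^t)" .
  next
    fix p :: "int^'m" and q :: "int^'n"
    assume q: "exact_pow2_at t i q" "q \<noteq> 0" and adm: "admissible v p q"
    show "admissible v (shifted_numerator 2 (\<lambda>j. q$i div 2^t) ?Z p q) q"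
    proof (rule admissible_transfer[OF adm q(2)])
      fix d j assume d: "prime d" "\<forall>r. d dvd q$r"
        and dv: "d dvd shifted_numerator 2 (\<lambda>j. q$i div 2^t) ?Z p q $ j"
      have qi: "2^t dvd q$i" "\<not> 2^(t+1) dvd q$i"
        using q(1) by (simp_all add: exact_pow2_at_def pow2_divides_def)
      have "d dvd (\<Sum>r\<in>UNIV. q$r * ?Z$r$j)" using d(2) by (intro dvd_sum) simp
      moreover have "d dvd 2 * p$j - q$i div 2^t + (\<Sum>r\<in>UNIV. q$r * ?Z$r$j)"
        using dv by (simp add: shifted_numerator_def)
      ultimately show "d dvd p$j"
        using prime_dvd_after_doubling[OF qi d(1)] d(2) by blast
    qed
  qed simp
  then have "infinite (solutions v \<Psi> (2 * k) (exact_pow2_at t i) (frac_mat (2 *\<^sub>R X + level_shift t i)))"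
    by simp
  moreover have "2 * k \<ge> 1" using k by simp
  ultimately show ?thesis
    using frac_mat_in_unit_cube unfolding valuation_level_set_def by blast
qed

lemma pow2_divides_mono: "s \<le> s' \<Longrightarrow> pow2_divides s' q \<Longrightarrow> pow2_divides s q"
  unfolding pow2_divides_def using le_imp_power_dvd dvd_trans by blast

text \<open>Invariance under the dyadic translations \<open>X \<mapsto> frac (X + 2^-s W)\<close>: solutions with
  \<open>2^(s+1)\<close> dividing \<open>q\<close> are transported with the same constant \<open>k\<close>, and there are
  infinitely many such solutions for every level.\<close>

lemma unbounded_valuation_set_dyadic_invariant:
  fixes X :: "real^'m^'n"
  assumes X: "X \<in> unbounded_valuation_set v \<Psi>"
  shows "frac_mat (X + (1/2^s) *\<^sub>R int_mat W) \<in> unbounded_valuation_set v \<Psi>"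
proof -
  obtain k where k: "k \<ge> 1" "\<And>s. infinite (solutions v \<Psi> k (pow2_divides s) X)"
    using X by (auto simp: unbounded_valuation_set_def)
  let ?C = "(1/2^s) *\<^sub>R int_mat W"
  let ?Z = "floor_mat (of_int 1 *\<^sub>R X + ?C)"
  have "infinite (solutions v \<Psi> k (pow2_divides s') (frac_mat (X + ?C)))" for s'
  proof -
    let ?s = "max s' (Suc s)"
    have "infinite (solutions v \<Psi> (nat 1 * k) (pow2_divides ?s) (frac_mat (of_int 1 *\<^sub>R X + ?C)))"
    proof (rule infinite_solutions_transport[OF k(2), where E = "\<lambda>q j. \<Sum>r\<in>UNIV. (q$r div 2^s) * W$r$j"])
      fix q :: "int^'n" and j assume "pow2_divides ?s q"
      then have "pow2_divides s q" by (rule pow2_divides_mono[rotated]) simp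
      then have dq: "2^s dvd q$r" for r by (simp add: pow2_divides_def)
      have "(\<Sum>r\<in>UNIV. real_of_int (q$r) * ?C $ r $ j)
          = (\<Sum>r\<in>UNIV. real_of_int (q$r div 2^s) * real_of_int (W$r$j))"
        using dq by (intro sum.cong refl) (simp add: real_of_int_div)
      then show "(\<Sum>r\<in>UNIV. real_of_int (q$r) * ?C $ r $ j)
          = real_of_int (\<Sum>r\<in>UNIV. (q$r div 2^s) * W$r$j)" by simp
    next
      fix p :: "int^'m" and q :: "int^'n"
      assume q: "pow2_divides ?s q" "q \<noteq> 0" and adm: "admissible v p q"
      show "admissible v (shifted_numerator 1 (\<lambda>j. \<Sum>r\<in>UNIV. (q$r div 2^s) * W$r$j) ?Z p q) q"
      proof (rule admissible_transfer[OF adm q(2)])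
        fix d j assume d: "prime d" "\<forall>r. d dvd q$r"
          and dv: "d dvd shifted_numerator 1 (\<lambda>j. \<Sum>r\<in>UNIV. (q$r div 2^s) * W$r$j) ?Z p q $ j"
        have "pow2_divides (s+1) q" using q(1) by (rule pow2_divides_mono[rotated]) simp
        then have "2^(s+1) dvd q$r" for r by (simp add: pow2_divides_def)
        then have "d dvd q$r div 2^s" for r
          using prime_dvd_div_pow2_of_even d(1) d(2) by blast
        then have "d dvd (\<Sum>r\<in>UNIV. (q$r div 2^s) * W$r$j)" by (intro dvd_sum dvd_mult2)
        moreover have "d dvd (\<Sum>r\<in>UNIV. q$r * ?Z$r$j)" using d(2) by (intro dvd_sum) simp
        ultimately have "d dvd shifted_numerator 1 (\<lambda>j. \<Sum>r\<in>UNIV. (q$r div 2^s) * W$r$j) ?Z p q $ j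
            + (\<Sum>r\<in>UNIV. (q$r div 2^s) * W$r$j) - (\<Sum>r\<in>UNIV. q$r * ?Z$r$j)"
          using dv by (intro dvd_diff dvd_add)
        then show "d dvd p$j" by (simp add: shifted_numerator_def)
      qed
    qed simp
    then have "infinite (solutions v \<Psi> k (pow2_divides ?s) (frac_mat (X + ?C)))" by simp
    then show ?thesis by (rule infinite_solutions_mono) (meson max.cobounded1 pow2_divides_mono)
  qed
  then show ?thesis
    using k(1) frac_mat_in_unit_cube unfolding unbounded_valuation_set_def by blast
qed

lemma exists_exact_pow2_at:
  "\<not> pow2_divides s q \<Longrightarrow> \<exists>t<s. \<exists>i. exact_pow2_at t i q"
proof (induction s)
  case 0
  then show ?case by (simp add: pow2_divides_def)
next
  case (Suc s)
  show ?case
  proof (cases "pow2_divides s q")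
    case True
    then obtain i where "\<not> 2^(s+1) dvd q$i" using Suc.prems by (auto simp: pow2_divides_def)
    then show ?thesis using True by (auto simp: exact_pow2_at_def)
  next
    case False
    then show ?thesis using Suc.IH less_SucI by blast
  qed
qed

lemma F_set_cover:
  "F_set v \<Psi> \<subseteq> unbounded_valuation_set v \<Psi> \<union> (\<Union>t. \<Union>i. valuation_level_set v \<Psi> t i)"
proof
  fix X assume "X \<in> F_set v \<Psi>"
  then obtain k where k: "k \<ge> 1" "X \<in> unit_cube" "infinite (solutions v \<Psi> k (\<lambda>_. True) X)"
    by (auto simp: F_set_def approx_set_eq_solutions)
  show "X \<in> unbounded_valuation_set v \<Psi> \<union> (\<Union>t. \<Union>i. valuation_level_set v \<Psi> t i)"
  proof (cases "\<forall>s. infinite (solutions v \<Psi> k (pow2_divides s) X)")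
    case True
    then show ?thesis using k by (auto simp: unbounded_valuation_set_def)
  next
    case False
    then obtain s where fin: "finite (solutions v \<Psi> k (pow2_divides s) X)" by blast
    have "solutions v \<Psi> k (\<lambda>_. True) X \<subseteq> solutions v \<Psi> k (pow2_divides s) X \<union>
        (\<Union>t\<in>{..<s}. \<Union>i. solutions v \<Psi> k (exact_pow2_at t i) X)"
    proof
      fix pq assume pq: "pq \<in> solutions v \<Psi> k (\<lambda>_. True) X"
      show "pq \<in> solutions v \<Psi> k (pow2_divides s) X \<union>
          (\<Union>t\<in>{..<s}. \<Union>i. solutions v \<Psi> k (exact_pow2_at t i) X)"
      proof (cases "pow2_divides s (snd pq)")
        case True
        then show ?thesis using pq by (auto simp: solutions_def)
      next
        case False
        then obtain t i where "t < s" "exact_pow2_at t i (snd pq)" using exists_exact_pow2_at by blast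
        then show ?thesis using pq by (auto simp: solutions_def)
      qed
    qed
    then have "infinite (\<Union>t\<in>{..<s}. \<Union>i. solutions v \<Psi> k (exact_pow2_at t i) X)"
      using k(3) fin finite_subset by blast
    then obtain t i where "infinite (solutions v \<Psi> k (exact_pow2_at t i) X)" by auto
    then show ?thesis using k by (auto simp: valuation_level_set_def)
  qed
qed

lemma in_F_setI:
  assumes "k \<ge> 1" "X \<in> unit_cube" "infinite (solutions v \<Psi> k P X)"
  shows "X \<in> F_set v \<Psi>"
proof -
  have "infinite (solutions v \<Psi> k (\<lambda>_. True) X)"
    using assms(3) by (rule infinite_solutions_mono) simp
  then show ?thesis using assms(1,2) unfolding F_set_def approx_set_eq_solutions by auto
qed

lemma valuation_level_set_subset: "valuation_level_set v \<Psi> t i \<subseteq> F_set v \<Psi>"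
proof
  fix X assume "X \<in> valuation_level_set v \<Psi> t i"
  then obtain k where "k \<ge> 1" "X \<in> unit_cube" "infinite (solutions v \<Psi> k (exact_pow2_at t i) X)"
    by (auto simp: valuation_level_set_def)
  then show "X \<in> F_set v \<Psi>" by (rule in_F_setI)
qed

lemma unbounded_valuation_set_subset: "unbounded_valuation_set v \<Psi> \<subseteq> F_set v \<Psi>"
proof
  fix X assume "X \<in> unbounded_valuation_set v \<Psi>"
  then obtain k where "k \<ge> 1" "X \<in> unit_cube" "infinite (solutions v \<Psi> k (pow2_divides 0) X)"
    by (auto simp: unbounded_valuation_set_def)
  then show "X \<in> F_set v \<Psi>" by (rule in_F_setI)
qed

lemma infinite_iff_to_nat_unbounded:
  "infinite (S :: 'a::countable set) \<longleftrightarrow> (\<forall>N. \<exists>x\<in>S. N < to_nat x)"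
proof -
  have "finite (to_nat ` S) \<longleftrightarrow> finite S"
    by (rule finite_image_iff) (rule inj_on_subset[OF inj_to_nat subset_UNIV])
  then have "infinite S \<longleftrightarrow> infinite (to_nat ` S)" by simp
  also have "\<dots> \<longleftrightarrow> (\<forall>N. \<exists>x\<in>S. N < to_nat x)"
    unfolding infinite_nat_iff_unbounded by blast
  finally show ?thesis .
qed

lemma open_approximation_region:
  "open {X :: real^'m^'n. sup_norm (row_times q X + (\<chi> j. real_of_int (p $ j))) < c}"
proof -
  have "{X :: real^'m^'n. sup_norm (row_times q X + (\<chi> j. real_of_int (p $ j))) < c}
      = (\<Inter>j\<in>UNIV. {X. \<bar>(\<Sum>i\<in>UNIV. real_of_int (q $ i) * X $ i $ j) + real_of_int (p$j)\<bar> < c})"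
    by (auto simp: sup_norm_less row_times_def)
  also have "open \<dots>"
    by (rule open_INT) (auto intro!: open_Collect_less continuous_intros)
  finally show ?thesis .
qed

text \<open>The set of points with infinitely many solutions is a countable intersection of
  countable unions of open sets, hence Borel.\<close>

lemma infinite_solutions_borel:
  "{X \<in> (unit_cube :: (real^'m^'n) set). infinite (solutions v \<Psi> k P X)} \<in> sets borel"
proof -
  let ?Adm = "{pq :: (int^'m) \<times> (int^'n). snd pq \<noteq> 0 \<and> admissible v (fst pq) (snd pq) \<and> P (snd pq)}"
  let ?O = "\<lambda>pq. {X :: real^'m^'n.
    sup_norm (row_times (snd pq) X + (\<chi> j. real_of_int (fst pq $ j))) < real k * \<Psi> (snd pq)}"
  have "solutions v \<Psi> k P X = {pq \<in> ?Adm. X \<in> ?O pq}" for X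
    by (auto simp: solutions_def)
  then have "{X \<in> (unit_cube :: (real^'m^'n) set). infinite (solutions v \<Psi> k P X)}
      = unit_cube \<inter> (\<Inter>N. \<Union>pq\<in>{pq\<in>?Adm. N < to_nat pq}. ?O pq)"
    unfolding infinite_iff_to_nat_unbounded by blast
  moreover have "open (\<Union>pq\<in>{pq\<in>?Adm. N < to_nat pq}. ?O pq)" for N
    using open_approximation_region by blast
  then have "(\<Inter>N. \<Union>pq\<in>{pq\<in>?Adm. N < to_nat pq}. ?O pq) \<in> sets borel"
    by (intro sets.countable_INT') auto
  ultimately show ?thesis using unit_cube_borel by (simp only:) (rule sets.Int)
qed

lemma F_set_borel: "F_set v \<Psi> \<in> sets borel"
  unfolding F_set_def approx_set_eq_solutions
  by (intro sets.countable_UN') (auto intro!: infinite_solutions_borel)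

lemma valuation_level_set_borel: "valuation_level_set v \<Psi> t i \<in> sets borel"
  unfolding valuation_level_set_def
  by (intro sets.countable_UN') (auto intro!: infinite_solutions_borel)

lemma unbounded_valuation_set_borel: "unbounded_valuation_set v \<Psi> \<in> sets borel"
proof -
  have "unbounded_valuation_set v \<Psi> = (\<Union>k\<in>{1..}. unit_cube \<inter>
      (\<Inter>s. {X \<in> unit_cube. infinite (solutions v \<Psi> k (pow2_divides s) X)}))"
    unfolding unbounded_valuation_set_def by blast
  also have "\<dots> \<in> sets borel"
    using unit_cube_borel
    by (intro sets.countable_UN') (auto intro!: sets.Int sets.countable_INT' infinite_solutions_borel)
  finally show ?thesis .
qed

lemma zero_one_by_cover:
  fixes F E :: "'a::euclidean_space set" and G :: "'i \<Rightarrow> 'a set"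
  assumes F: "F \<in> lmeasurable" "measure lebesgue F \<le> 1"
    and E: "E \<in> sets lebesgue" "E \<subseteq> F" "measure lebesgue E = 0 \<or> measure lebesgue E = 1"
    and I: "countable I"
    and G: "\<And>i. i \<in> I \<Longrightarrow> G i \<in> sets lebesgue" "\<And>i. i \<in> I \<Longrightarrow> G i \<subseteq> F"
      "\<And>i. i \<in> I \<Longrightarrow> measure lebesgue (G i) = 0 \<or> measure lebesgue (G i) = 1"
    and cover: "F \<subseteq> E \<union> (\<Union>i\<in>I. G i)"
  shows "measure lebesgue F = 0 \<or> measure lebesgue F = 1"
proof (cases "\<exists>i\<in>I. measure lebesgue (G i) = 1")
  case True
  then obtain i where i: "i \<in> I" and Gi: "measure lebesgue (G i) = 1" by blast
  have "measure lebesgue (G i) \<le> measure lebesgue F"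
    by (rule measure_mono_fmeasurable[OF G(2)[OF i] G(1)[OF i] F(1)])
  then show ?thesis using F(2) Gi by simp
next
  case False
  have "G i \<in> null_sets lebesgue" if i: "i \<in> I" for i
  proof -
    have "measure lebesgue (G i) = 0" using False G(3)[OF i] i by blast
    moreover have "G i \<in> lmeasurable" by (rule fmeasurableI2[OF F(1) G(2)[OF i] G(1)[OF i]])
    ultimately show ?thesis by (simp add: null_sets_def emeasure_eq_measure2 fmeasurableD)
  qed
  then have "(\<Union>i\<in>I. G i) \<in> null_sets lebesgue" by (rule null_sets_UN'[OF I])
  moreover have "F - E \<in> sets lebesgue" using fmeasurableD[OF F(1)] E(1) by (rule sets.Diff)
  moreover have "F - E \<subseteq> (\<Union>i\<in>I. G i)" using cover by blast
  ultimately have "F - E \<in> null_sets lebesgue" by (rule null_sets_subset)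
  then have "measure lebesgue (E \<union> (F - E)) = measure lebesgue E"
    by (rule measure_Un_null_set[OF E(1)])
  moreover have "E \<union> (F - E) = F" using E(2) by blast
  ultimately have "measure lebesgue F = measure lebesgue E" by simp
  then show ?thesis using E(3) by simp
qed

lemma zero_one_unbounded_valuation_set:
  "measure lebesgue (unbounded_valuation_set v \<Psi> \<inter> half_open_cube :: (real^'m^'n) set) = 0 \<or>
   measure lebesgue (unbounded_valuation_set v \<Psi> \<inter> half_open_cube :: (real^'m^'n) set) = 1"
proof (rule zero_one_dyadic_translation_invariant)
  show "unbounded_valuation_set v \<Psi> \<inter> half_open_cube \<in> sets lebesgue"
    by (rule inter_half_open_cube_lebesgue[OF unbounded_valuation_set_borel])
  fix X s W assume "X \<in> unbounded_valuation_set v \<Psi> \<inter> (half_open_cube :: (real^'m^'n) set)"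
  then show "frac_mat (X + (1/2^s) *\<^sub>R int_mat W) \<in> unbounded_valuation_set v \<Psi> \<inter> half_open_cube"
    using unbounded_valuation_set_dyadic_invariant frac_mat_in_half_open_cube by blast
qed simp

lemma zero_one_valuation_level_set:
  "measure lebesgue (valuation_level_set v \<Psi> t i \<inter> half_open_cube :: (real^'m^'n) set) = 0 \<or>
   measure lebesgue (valuation_level_set v \<Psi> t i \<inter> half_open_cube :: (real^'m^'n) set) = 1"
proof (rule zero_one_doubling_invariant[where c = "level_shift t i"])
  show "valuation_level_set v \<Psi> t i \<inter> half_open_cube \<in> sets lebesgue"
    by (rule inter_half_open_cube_lebesgue[OF valuation_level_set_borel])
  fix X assume "X \<in> valuation_level_set v \<Psi> t i \<inter> (half_open_cube :: (real^'m^'n) set)"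
  then show "frac_mat (2 *\<^sub>R X + level_shift t i) \<in> valuation_level_set v \<Psi> t i \<inter> half_open_cube"
    using valuation_level_set_doubling_invariant frac_mat_in_half_open_cube by blast
qed simp

lemma zero_one_F_set_in_half_open_cube:
  "measure lebesgue (F_set v \<Psi> \<inter> half_open_cube :: (real^'m^'n) set) = 0 \<or>
   measure lebesgue (F_set v \<Psi> \<inter> half_open_cube :: (real^'m^'n) set) = 1"
proof (rule zero_one_by_cover[where E = "unbounded_valuation_set v \<Psi> \<inter> half_open_cube" and I = UNIV
      and G = "\<lambda>ti. valuation_level_set v \<Psi> (fst ti) (snd ti) \<inter> half_open_cube"])
  have FH: "F_set v \<Psi> \<inter> half_open_cube \<in> sets lebesgue"
    by (rule inter_half_open_cube_lebesgue[OF F_set_borel])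
  show "F_set v \<Psi> \<inter> half_open_cube \<in> lmeasurable"
    by (rule fmeasurableI2[OF half_open_cube_lmeasurable Int_lower2 FH])
  show "measure lebesgue (F_set v \<Psi> \<inter> half_open_cube :: (real^'m^'n) set) \<le> 1"
    using measure_mono_fmeasurable[OF Int_lower2 FH half_open_cube_lmeasurable]
    by (simp add: measure_half_open_cube)
  show "unbounded_valuation_set v \<Psi> \<inter> half_open_cube \<in> sets lebesgue"
    by (rule inter_half_open_cube_lebesgue[OF unbounded_valuation_set_borel])
  show "unbounded_valuation_set v \<Psi> \<inter> half_open_cube \<subseteq> F_set v \<Psi> \<inter> half_open_cube"
    using unbounded_valuation_set_subset by blast
  show "measure lebesgue (unbounded_valuation_set v \<Psi> \<inter> half_open_cube :: (real^'m^'n) set) = 0 \<or>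
      measure lebesgue (unbounded_valuation_set v \<Psi> \<inter> half_open_cube :: (real^'m^'n) set) = 1"
    by (rule zero_one_unbounded_valuation_set)
  fix ti :: "nat \<times> 'n"
  show "valuation_level_set v \<Psi> (fst ti) (snd ti) \<inter> half_open_cube \<in> sets lebesgue"
    by (rule inter_half_open_cube_lebesgue[OF valuation_level_set_borel])
  show "valuation_level_set v \<Psi> (fst ti) (snd ti) \<inter> half_open_cube \<subseteq> F_set v \<Psi> \<inter> half_open_cube"
    using valuation_level_set_subset by blast
  show "measure lebesgue (valuation_level_set v \<Psi> (fst ti) (snd ti) \<inter> half_open_cube :: (real^'m^'n) set) = 0 \<or>
      measure lebesgue (valuation_level_set v \<Psi> (fst ti) (snd ti) \<inter> half_open_cube :: (real^'m^'n) set) = 1"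
    by (rule zero_one_valuation_level_set)
next
  show "F_set v \<Psi> \<inter> half_open_cube \<subseteq> unbounded_valuation_set v \<Psi> \<inter> half_open_cube \<union>
      (\<Union>ti\<in>UNIV. valuation_level_set v \<Psi> (fst ti) (snd ti) \<inter> (half_open_cube :: (real^'m^'n) set))"
    using F_set_cover[of v \<Psi>] by fastforce
qed simp

theorem theorem2:
  fixes \<Psi> :: "int ^ 'n \<Rightarrow> real" and v :: variant
  assumes "\<forall>q. \<Psi> q > 0"
  shows "(F_set v \<Psi> :: (real ^ 'm ^ 'n) set) \<in> sets lebesgue \<and>
         (emeasure lebesgue (F_set v \<Psi> :: (real ^ 'm ^ 'n) set) = 0 \<or>
          emeasure lebesgue (F_set v \<Psi> :: (real ^ 'm ^ 'n) set) = 1)"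
proof -
  let ?F = "F_set v \<Psi> :: (real ^ 'm ^ 'n) set"
  have F: "?F \<in> sets lebesgue" "?F \<subseteq> unit_cube"
    using F_set_borel borel_imp_lebesgue by (auto simp: F_set_def approx_set_def)
  have "?F \<in> lmeasurable"
    using F unit_cube_cbox by (intro fmeasurableI2[OF lmeasurable_cbox[of 0 One]]) auto
  moreover have "measure lebesgue (?F \<inter> half_open_cube) = 0 \<or>
      measure lebesgue (?F \<inter> half_open_cube) = 1"
    by (rule zero_one_F_set_in_half_open_cube)
  then have "measure lebesgue ?F = 0 \<or> measure lebesgue ?F = 1"
    by (simp add: measure_inter_half_open_cube[OF F])
  ultimately show ?thesis using F(1) by (auto simp: emeasure_eq_measure2)
qed

end
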